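(* Let $p$ be a prime and let $q$ be an integer with $\gcd(q,p)=1$. For $n\geq 1$ let $\Gamma_{p,n,q}$ be the directed graph with vertex set $\mathbb{Z}_{p^n}=\{0,1,\dots,p^n-1\}$ and edge set $$E=\{(x,\, q^y \bmod p^n)\;:\; x\in\mathbb{Z}_{p^n},\ y\in\mathbb{Z}_{\geq 0},\ y\equiv x \pmod{p^n}\},$$ and let $A_n$ be its adjacency matrix, with rows and columns indexed by $0,1,\dots,p^n-1$ in increasing order. Then: (1) If $q$ is a primitive root modulo $p$, then $A_1$ is the $p\times p$ matrix whose first column (index $0$) is zero and all of whose other entries equal $1$. If $q$ is not a primitive root modulo $p$, then $A_1$ is obtained from this matrix by changing some entries $1$ to $0$. (2) For $n>1$, writing $A_n$ in $p\times p$ block form with blocks of size $p^{n-1}\times p^{n-1}$ (block $b\in\{0,\dots,p-1\}$ corresponding to indices $bp^{n-1},\dots,(b+1)p^{n-1}-1$), there exist matrices $B_1^n,\dots,B_p^n\in\mathrm{Mat}_{p^{n-1}\times p^{n-1}}(\mathbb{Z})$ such that $$A_n=\begin{pmatrix} B_1^n & B_2^n &\dots & B_p^n \\ B_1^n & B_2^n &\dots & B_p^n \\ \vdots &\vdots & &\vdots \\ B_1^n & B_2^n &\dots & B_p^n \end{pmatrix}$$ (every block row is the same) and $B_1^n+B_2^n+\dots+B_p^n=A_{n-1}$.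
   Context: Here $q^y \bmod p^n$ denotes the representative of $q^y$ modulo $p^n$ in $\{0,1,\dots,p^n-1\}$. The adjacency matrix has entry $1$ in position $(x,z)$ if $(x,z)$ is an edge and $0$ otherwise. *)

theory Defs
  imports "HOL-Number_Theory.Number_Theory"
begin

definition gamma_edge :: "nat \<Rightarrow> nat \<Rightarrow> int \<Rightarrow> nat \<Rightarrow> nat \<Rightarrow> bool" where
  "gamma_edge p n q x z \<longleftrightarrow> x < p ^ n \<and>
     (\<exists>y::nat. [y = x] (mod p ^ n) \<and> int z = q ^ y mod int (p ^ n))"

definition adj :: "nat \<Rightarrow> nat \<Rightarrow> int \<Rightarrow> nat \<Rightarrow> nat \<Rightarrow> int" where
  "adj p n q x z = (if gamma_edge p n q x z then 1 else 0)"

definition is_primroot_int :: "nat \<Rightarrow> int \<Rightarrow> bool" where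
  "is_primroot_int p q \<longleftrightarrow> residue_primroot p (nat (q mod int p))"

end

theory Submission imports Defs begin

(* Write N = p^n and m = p^(n-1). Euler gives q^(m(p-1)) = 1 (mod N), and since
   gcd(N, m(p-1)) = m, the exponents y = x (mod N) meet every class of y modulo m(p-1) that
   is compatible with x (mod m). Hence the out-neighbours of x are the residues q^y mod N with
   y = x (mod m). They depend only on x mod m, so all block rows of A_n coincide; for n = 1 they
   are the powers of q mod p, which exhaust the nonzero residues iff q is a primitive root.

   For n >= 2, reduction mod m maps the out-neighbours of i at level n onto those at level n-1,
   and it is injective: if q^y1 = q^y2 (mod m) with y2 = y1 + kN, then w = q^(kN) = 1 (mod m);
   as p divides m, the factorisation w^p - 1 = (w - 1)(1 + w + ... + w^(p-1)) gives
   w^p = 1 (mod N), while w^(p-1) = 1 (mod N) by Euler; hence w = 1 (mod N). So each edge (i, j) of level n-1 lifts to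
   exactly one block column b, which is the identity B_1 + ... + B_p = A_(n-1). *)

lemma euler_theorem_int:
  fixes q :: int
  assumes "coprime q (int M)"
  shows "[q ^ totient M = 1] (mod int M)"
proof (cases "M \<le> 1")
  case True
  then show ?thesis
    by (auto simp: le_Suc_eq)
next
  case False
  then have "residues (int M)"
    by (simp add: residues_def)
  from residues.euler_theorem[OF this assms] show ?thesis
    by simp
qed

lemma cong_power_add_mult:
  fixes q :: "'a::unique_euclidean_semiring"
  assumes "[q ^ e = 1] (mod N)"
  shows "[q ^ (y + e * k) = q ^ y] (mod N)"
proof -
  have "[q ^ y * (q ^ e) ^ k = q ^ y * 1 ^ k] (mod N)"
    using assms by (intro cong_mult cong_pow cong_refl)
  then show ?thesis
    by (simp add: power_add power_mult)
qed

lemma cong_power_totient_prime_power: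
  fixes q :: int
  assumes "prime p" "coprime q (int p)" "0 < n"
  shows "[q ^ (p ^ (n - 1) * (p - 1)) = 1] (mod int (p ^ n))"
  using euler_theorem_int[of q "p ^ n"] assms by (simp add: totient_prime_power)

lemma exists_cong_shift:
  fixes x y m p :: nat
  assumes "1 < p" "[y = x] (mod m)"
  obtains t where "[y + m * (p - 1) * t = x] (mod p * m)"
proof
  obtain s where s: "p = Suc (Suc s)"
    using less_imp_Suc_add[OF assms(1)] by auto
  define r a c where "r = x mod m" and "a = x div m" and "c = y div m"
  have x: "x = m * a + r" and y: "y = m * c + r"
    using assms(2) mult_div_mod_eq[of m x] mult_div_mod_eq[of m y]
    by (simp_all add: r_def a_def c_def cong_def)
  (* the witness works because (p - 1)^2 = 1 (mod p) *)
  have "y + m * (p - 1) * (c + (p - 1) * a) = x + p * m * (c + s * a)"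
    unfolding x y by (simp add: s algebra_simps)
  then show "[y + m * (p - 1) * (c + (p - 1) * a) = x] (mod p * m)"
    by (simp add: cong_def)
qed

lemma cong_power_one_lift:
  fixes w :: int
  assumes "p dvd m" "[w = 1] (mod int m)"
  shows "[w ^ p = 1] (mod int (p * m))"
proof -
  have "[w = 1] (mod int p)"
    using assms by (meson cong_dvd_modulus int_dvd_int_iff)
  then have "[(\<Sum>i<p. w ^ i) = (\<Sum>i<p. 1)] (mod int p)"
    by (intro cong_sum) (metis cong_pow power_one)
  then have "int p dvd (\<Sum>i<p. w ^ i)"
    by (simp add: cong_def dvd_eq_mod_eq_0)
  moreover have "int m dvd w - 1"
    using assms(2) by (simp add: cong_iff_dvd_diff)
  ultimately have "int (p * m) dvd (w - 1) * (\<Sum>i<p. w ^ i)"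
    by (simp add: mult_dvd_mono mult.commute)
  then show ?thesis
    by (simp add: power_diff_1_eq cong_iff_dvd_diff)
qed

lemma cong_one_of_consecutive_powers:
  fixes w :: "'a::unique_euclidean_semiring"
  assumes "[w ^ p = 1] (mod N)" "[w ^ (p - 1) = 1] (mod N)" "0 < p"
  shows "[w = 1] (mod N)"
proof -
  have "[w = w ^ (p - 1) * w] (mod N)"
    using cong_mult[OF assms(2) cong_refl[of w]] by (simp add: cong_sym_eq)
  also have "w ^ (p - 1) * w = w ^ p"
    using assms(3) by (rule power_minus_mult)
  also note assms(1)
  finally show ?thesis .
qed

lemma cong_power_multiple_prime_power:
  fixes q :: int
  assumes "prime p" "coprime q (int p)" "2 \<le> n"
    and "[q ^ (k * p ^ n) = 1] (mod int (p ^ (n - 1)))"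
  shows "[q ^ (k * p ^ n) = 1] (mod int (p ^ n))"
proof -
  define m where "m = p ^ (n - 1)"
  have pm: "p ^ n = p * m"
    using assms(3) by (simp add: m_def power_eq_if)
  have "p dvd m"
    using assms(3) by (simp add: m_def)
  from this assms(4) have power_p: "[(q ^ (k * p ^ n)) ^ p = 1] (mod int (p ^ n))"
    unfolding pm m_def[symmetric] by (rule cong_power_one_lift)
  have "(q ^ (k * p ^ n)) ^ (p - 1) = q ^ (0 + m * (p - 1) * (p * k))"
    by (simp add: pm algebra_simps flip: power_mult)
  also have "[\<dots> = q ^ 0] (mod int (p ^ n))"
    using cong_power_totient_prime_power[OF assms(1,2)] assms(3)
    by (intro cong_power_add_mult) (simp add: m_def)
  finally have "[(q ^ (k * p ^ n)) ^ (p - 1) = 1] (mod int (p ^ n))"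
    by simp
  from power_p this prime_gt_0_nat[OF assms(1)] show ?thesis
    by (rule cong_one_of_consecutive_powers)
qed

lemma cong_power_prime_power_lift:
  fixes q :: int
  assumes "prime p" "coprime q (int p)" "2 \<le> n"
    and "[y1 = y2] (mod p ^ n)" "[q ^ y1 = q ^ y2] (mod int (p ^ (n - 1)))"
  shows "[q ^ y1 = q ^ y2] (mod int (p ^ n))"
proof -
  have lift: "[q ^ y * q ^ (k * p ^ n) = q ^ y] (mod int (p ^ n))"
    if "[q ^ y * q ^ (k * p ^ n) = q ^ y] (mod int (p ^ (n - 1)))" for y k
  proof -
    have "coprime (q ^ y) (int (p ^ (n - 1)))"
      using assms(2) by simp
    with that have "[q ^ (k * p ^ n) = 1] (mod int (p ^ (n - 1)))"
      using cong_mult_lcancel[of "q ^ y" "int (p ^ (n - 1))" _ 1] by simp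
    then have "[q ^ (k * p ^ n) = 1] (mod int (p ^ n))"
      by (rule cong_power_multiple_prime_power[OF assms(1-3)])
    then have "[q ^ y * q ^ (k * p ^ n) = q ^ y * 1] (mod int (p ^ n))"
      by (intro cong_mult cong_refl)
    then show ?thesis
      by simp
  qed
  consider "y1 \<le> y2" | "y2 \<le> y1"
    by linarith
  then show ?thesis
  proof cases
    case 1
    then obtain k where "y2 = k * p ^ n + y1"
      using cong_le_nat[OF 1, of "p ^ n"] assms(4) by (auto simp: cong_sym_eq)
    then have "q ^ y2 = q ^ y1 * q ^ (k * p ^ n)"
      by (simp add: power_add mult.commute)
    with assms(5) lift show ?thesis
      by (simp add: cong_sym_eq)
  next
    case 2
    then obtain k where "y1 = k * p ^ n + y2"
      using cong_le_nat[OF 2, of "p ^ n"] assms(4) by auto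
    then have "q ^ y1 = q ^ y2 * q ^ (k * p ^ n)"
      by (simp add: power_add mult.commute)
    with assms(5) lift show ?thesis
      by simp
  qed
qed

lemma power_mod_neq_0:
  fixes q :: int
  assumes "coprime q (int M)" "M \<noteq> 1"
  shows "q ^ y mod int M \<noteq> 0"
proof
  assume "q ^ y mod int M = 0"
  then have "int M dvd q ^ y"
    by (simp add: dvd_eq_mod_eq_0)
  moreover have "coprime (q ^ y) (int M)"
    using assms(1) by simp
  ultimately have "is_unit (int M)"
    by (meson coprime_common_divisor dvd_refl)
  with assms(2) show False
    by simp
qed

lemma mod_eq_block_offset:
  fixes a :: int
  assumes "M dvd N" "j < M" "int (b * M + j) = a mod int N"
  shows "a mod int M = int j"
proof -
  have "a mod int M = (a mod int N) mod int M"
    using assms(1) by (simp add: mod_mod_cancel)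
  also have "\<dots> = int ((b * M + j) mod M)"
    by (simp add: assms(3)[symmetric] of_nat_mod)
  also have "\<dots> = int j"
    using assms(2) by simp
  finally show ?thesis .
qed

lemma residue_primroot_iff_totatives_subset:
  fixes n g :: nat
  assumes "1 < n" "coprime n g"
  shows "residue_primroot n g \<longleftrightarrow> totatives n \<subseteq> range (\<lambda>i. g ^ i mod n)"
proof
  assume "residue_primroot n g"
  then have "(\<lambda>i. g ^ i mod n) ` {..<totient n} = totatives n"
    using residue_primroot_is_generator[OF assms(1)] by (simp add: bij_betw_def)
  then show "totatives n \<subseteq> range (\<lambda>i. g ^ i mod n)"
    by blast
next
  assume cover: "totatives n \<subseteq> range (\<lambda>i. g ^ i mod n)"
  have "g ^ i mod n = g ^ (i mod ord n g) mod n" for i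
    using order_divides_expdiff[OF assms(2), of i "i mod ord n g"] by (simp add: cong_def)
  moreover have "i mod ord n g < ord n g" for i
    using assms(2) by simp
  ultimately have "range (\<lambda>i. g ^ i mod n) \<subseteq> (\<lambda>i. g ^ i mod n) ` {..<ord n g}"
    by blast
  with cover have "totient n \<le> card ((\<lambda>i. g ^ i mod n) ` {..<ord n g})"
    unfolding totient_def by (intro card_mono) auto
  also have "\<dots> \<le> ord n g"
    using card_image_le[of "{..<ord n g}" "\<lambda>i. g ^ i mod n"] by simp
  finally have "totient n \<le> ord n g" .
  moreover have "ord n g dvd totient n"
    using assms(2) by (rule order_divides_totient)
  ultimately have "ord n g = totient n"
    using assms(1) by (simp add: dvd_imp_le le_antisym)
  with assms show "residue_primroot n g"
    by (simp add: residue_primroot_def)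
qed

lemma is_primroot_int_iff:
  assumes "prime p" "coprime q (int p)"
  shows "is_primroot_int p q \<longleftrightarrow> (\<forall>z. 0 < z \<and> z < p \<longrightarrow> (\<exists>y. int z = q ^ y mod int p))"
proof -
  define Q where "Q = nat (q mod int p)"
  have p: "1 < p"
    using assms(1) by (rule prime_gt_1_nat)
  have Q: "int Q = q mod int p"
    using p by (simp add: Q_def)
  have powers: "int (Q ^ y mod p) = q ^ y mod int p" for y
    by (simp add: of_nat_mod Q power_mod)
  have "coprime (int Q) (int p)"
    unfolding Q using assms(2) p by simp
  then have "coprime p Q"
    by (simp add: coprime_commute)
  then have "is_primroot_int p q \<longleftrightarrow> totatives p \<subseteq> range (\<lambda>i. Q ^ i mod p)"
    unfolding is_primroot_int_def Q_def[symmetric]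
    by (rule residue_primroot_iff_totatives_subset[OF p])
  also have "\<dots> \<longleftrightarrow> (\<forall>z. 0 < z \<and> z < p \<longrightarrow> (\<exists>y. z = Q ^ y mod p))"
    by (auto simp: totatives_prime[OF assms(1)] subset_iff image_iff)
  also have "\<dots> \<longleftrightarrow> (\<forall>z. 0 < z \<and> z < p \<longrightarrow> (\<exists>y. int z = q ^ y mod int p))"
    by (simp flip: powers)
  finally show ?thesis .
qed

lemma gamma_edge_iff:
  assumes "prime p" "coprime q (int p)" "0 < n"
  shows "gamma_edge p n q x z \<longleftrightarrow> x < p ^ n \<and>
           (\<exists>y. [y = x] (mod p ^ (n - 1)) \<and> int z = q ^ y mod int (p ^ n))"
proof -
  define m where "m = p ^ (n - 1)"
  have pm: "p ^ n = p * m"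
    using assms(3) by (simp add: m_def power_eq_if)
  have "\<exists>y'. [y' = x] (mod p ^ n) \<and> int z = q ^ y' mod int (p ^ n)"
    if y: "[y = x] (mod m)" "int z = q ^ y mod int (p ^ n)" for y
  proof -
    obtain t where t: "[y + m * (p - 1) * t = x] (mod p * m)"
      using exists_cong_shift[OF prime_gt_1_nat[OF assms(1)] y(1)] by blast
    have "[q ^ (y + m * (p - 1) * t) = q ^ y] (mod int (p ^ n))"
      using cong_power_totient_prime_power[OF assms]
      by (intro cong_power_add_mult) (simp add: m_def)
    with y(2) have "int z = q ^ (y + m * (p - 1) * t) mod int (p ^ n)"
      by (simp add: cong_def)
    with t pm show ?thesis
      by auto
  qed
  moreover have "[y = x] (mod m)" if "[y = x] (mod p ^ n)" for y
    using that by (rule cong_dvd_modulus_nat) (simp add: pm)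
  ultimately show ?thesis
    unfolding gamma_edge_def m_def by blast
qed

lemma adj_one_eq:
  assumes "prime p" "coprime q (int p)" "x < p"
  shows "adj p 1 q x z = (if 0 < z \<and> (\<exists>y. int z = q ^ y mod int p) then 1 else 0)"
proof -
  have "p \<noteq> 1"
    using assms(1) by auto
  then have "0 < z" if "int z = q ^ y mod int p" for y
    using that power_mod_neq_0[OF assms(2), of y] by (metis gr0I of_nat_0)
  then have "(\<exists>y. int z = q ^ y mod int p) \<longleftrightarrow> 0 < z \<and> (\<exists>y. int z = q ^ y mod int p)"
    by blast
  then show ?thesis
    unfolding adj_def using gamma_edge_iff[OF assms(1,2), of 1] assms(3) by simp
qed

lemma adj_one_complete_iff_primroot:
  assumes "prime p" "coprime q (int p)"
  shows "(\<forall>x<p. \<forall>z<p. adj p 1 q x z = (if z = 0 then 0 else 1)) \<longleftrightarrow> is_primroot_int p q"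
proof -
  have "adj p 1 q x z = (if z = 0 then 0 else 1) \<longleftrightarrow> (0 < z \<longrightarrow> (\<exists>y. int z = q ^ y mod int p))"
    if "x < p" for x z
    using adj_one_eq[OF assms that, of z] by auto
  then have "(\<forall>x<p. \<forall>z<p. adj p 1 q x z = (if z = 0 then 0 else 1))
             \<longleftrightarrow> (\<forall>z. 0 < z \<and> z < p \<longrightarrow> (\<exists>y. int z = q ^ y mod int p))"
    using prime_gt_0_nat[OF assms(1)] by blast
  with is_primroot_int_iff[OF assms] show ?thesis
    by simp
qed

lemma gamma_edge_block_row:
  assumes "prime p" "coprime q (int p)" "0 < n" "a < p" "i < p ^ (n - 1)"
  shows "gamma_edge p n q (a * p ^ (n - 1) + i) z \<longleftrightarrow> gamma_edge p n q i z"
proof -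
  have "a * p ^ (n - 1) + i < (a + 1) * p ^ (n - 1)"
    using assms(5) by simp
  also have "\<dots> \<le> p * p ^ (n - 1)"
    using assms(4) by (intro mult_right_mono) simp_all
  also have "\<dots> = p ^ n"
    using assms(3) by (simp add: power_eq_if)
  finally have "a * p ^ (n - 1) + i < p ^ n" .
  moreover have "[y = a * p ^ (n - 1) + i] (mod p ^ (n - 1)) \<longleftrightarrow> [y = i] (mod p ^ (n - 1))" for y
    by (simp add: cong_def)
  ultimately show ?thesis
    by (simp add: gamma_edge_iff[OF assms(1-3)])
qed

lemma adj_block_row:
  assumes "prime p" "coprime q (int p)" "0 < n" "a < p" "i < p ^ (n - 1)"
  shows "adj p n q (a * p ^ (n - 1) + i) z = adj p n q i z"
  by (simp only: adj_def gamma_edge_block_row[OF assms])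

lemma gamma_edge_project:
  assumes "i < p ^ (n - 1)" "j < p ^ (n - 1)" "gamma_edge p n q i (b * p ^ (n - 1) + j)"
  shows "gamma_edge p (n - 1) q i j"
proof -
  have dvd: "p ^ (n - 1) dvd p ^ n"
    by (simp add: le_imp_power_dvd)
  obtain y where "[y = i] (mod p ^ n)" "int (b * p ^ (n - 1) + j) = q ^ y mod int (p ^ n)"
    using assms(3) by (auto simp: gamma_edge_def)
  with dvd assms(2) have "[y = i] (mod p ^ (n - 1))" "int j = q ^ y mod int (p ^ (n - 1))"
    by (auto intro: cong_dvd_modulus_nat dest: mod_eq_block_offset)
  with assms(1) show ?thesis
    by (auto simp: gamma_edge_def)
qed

lemma gamma_edge_lift_exists:
  assumes "prime p" "coprime q (int p)" "0 < n" "gamma_edge p (n - 1) q i j"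
  obtains b where "b < p" "gamma_edge p n q i (b * p ^ (n - 1) + j)"
proof -
  define m where "m = p ^ (n - 1)"
  have pm: "p ^ n = p * m"
    using assms(3) by (simp add: m_def power_eq_if)
  have m: "0 < m"
    using assms(1) by (simp add: m_def prime_gt_0_nat)
  obtain y where i: "i < m" and y: "[y = i] (mod m)" "int j = q ^ y mod int m"
    using assms(4) by (auto simp: gamma_edge_def m_def)
  define z where "z = nat (q ^ y mod int (p ^ n))"
  have "0 < int (p ^ n)"
    using m pm prime_gt_0_nat[OF assms(1)] by simp
  then have "0 \<le> q ^ y mod int (p ^ n)" "q ^ y mod int (p ^ n) < int (p ^ n)"
    by (rule pos_mod_sign, rule pos_mod_bound)
  then have z: "int z = q ^ y mod int (p ^ n)" and "z < p * m"
    unfolding z_def pm by linarith+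
  define b where "b = z div m"
  have "b < p"
    using \<open>z < p * m\<close> by (simp add: b_def div_less_iff_less_mult m)
  have "int (z mod m) = int j"
    using y(2) z pm by (simp add: of_nat_mod mod_mod_cancel)
  then have zb: "z = b * m + j"
    using div_mult_mod_eq[of z m] by (simp add: b_def)
  have "m \<le> p * m"
    using prime_gt_0_nat[OF assms(1)] by simp
  with i pm have "i < p ^ n"
    by linarith
  with y(1) z have "gamma_edge p n q i (b * m + j)"
    unfolding zb by (auto simp: gamma_edge_iff[OF assms(1-3)] m_def)
  with \<open>b < p\<close> show ?thesis
    unfolding m_def by (rule that)
qed

lemma gamma_edge_lift_unique:
  assumes "prime p" "coprime q (int p)" "2 \<le> n" "j < p ^ (n - 1)"
    and "gamma_edge p n q i (b1 * p ^ (n - 1) + j)" "gamma_edge p n q i (b2 * p ^ (n - 1) + j)"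
  shows "b1 = b2"
proof -
  have dvd: "p ^ (n - 1) dvd p ^ n"
    by (simp add: le_imp_power_dvd)
  obtain y1 where y1: "[y1 = i] (mod p ^ n)" "int (b1 * p ^ (n - 1) + j) = q ^ y1 mod int (p ^ n)"
    using assms(5) by (auto simp: gamma_edge_def)
  obtain y2 where y2: "[y2 = i] (mod p ^ n)" "int (b2 * p ^ (n - 1) + j) = q ^ y2 mod int (p ^ n)"
    using assms(6) by (auto simp: gamma_edge_def)
  have "[q ^ y1 = q ^ y2] (mod int (p ^ (n - 1)))"
    using mod_eq_block_offset[OF dvd assms(4) y1(2)] mod_eq_block_offset[OF dvd assms(4) y2(2)]
    by (simp add: cong_def)
  moreover have "[y1 = y2] (mod p ^ n)"
    using y1(1) y2(1) by (metis cong_sym cong_trans)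
  ultimately have "[q ^ y1 = q ^ y2] (mod int (p ^ n))"
    using cong_power_prime_power_lift[OF assms(1-3)] by blast
  then have "int (b1 * p ^ (n - 1) + j) = int (b2 * p ^ (n - 1) + j)"
    unfolding y1(2) y2(2) cong_def .
  then have "b1 * p ^ (n - 1) + j = b2 * p ^ (n - 1) + j"
    by (simp only: of_nat_eq_iff)
  with assms(1) show ?thesis
    by (simp add: prime_gt_0_nat)
qed

lemma adj_block_column_sum:
  assumes "prime p" "coprime q (int p)" "2 \<le> n" "i < p ^ (n - 1)" "j < p ^ (n - 1)"
  shows "(\<Sum>b<p. adj p n q i (b * p ^ (n - 1) + j)) = adj p (n - 1) q i j"
proof (cases "gamma_edge p (n - 1) q i j")
  case True
  moreover have "0 < n"
    using assms(3) by simp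
  ultimately obtain b0 where b0: "b0 < p" "gamma_edge p n q i (b0 * p ^ (n - 1) + j)"
    using gamma_edge_lift_exists[OF assms(1,2)] by blast
  have "adj p n q i (b * p ^ (n - 1) + j) = (if b = b0 then 1 else 0)" for b
  proof (cases "b = b0")
    case True
    with b0(2) show ?thesis
      by (simp add: adj_def)
  next
    case False
    then have "\<not> gamma_edge p n q i (b * p ^ (n - 1) + j)"
      using gamma_edge_lift_unique[OF assms(1-3,5) b0(2), of b] by blast
    with False show ?thesis
      by (simp add: adj_def)
  qed
  then have "(\<Sum>b<p. adj p n q i (b * p ^ (n - 1) + j)) = 1"
    using b0(1) by simp
  with True show ?thesis
    by (simp add: adj_def)
next
  case False
  then have "adj p n q i (b * p ^ (n - 1) + j) = 0" for b
    using gamma_edge_project[OF assms(4,5), of q b] unfolding adj_def by auto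
  with False show ?thesis
    by (simp add: adj_def)
qed

theorem lemma5:
  fixes p :: nat and q :: int
  assumes "prime p" and "coprime q (int p)"
  shows "(is_primroot_int p q \<longrightarrow>
            (\<forall>x<p. \<forall>z<p. adj p 1 q x z = (if z = 0 then 0 else 1)))
       \<and> (\<not> is_primroot_int p q \<longrightarrow>
            (\<forall>x<p. \<forall>z<p. adj p 1 q x z \<le> (if z = 0 then 0 else 1))
            \<and> (\<exists>x<p. \<exists>z<p. adj p 1 q x z \<noteq> (if z = 0 then 0 else 1)))
       \<and> (\<forall>n>1. \<exists>B :: nat \<Rightarrow> nat \<Rightarrow> nat \<Rightarrow> int.
            (\<forall>a<p. \<forall>b<p. \<forall>i<p ^ (n - 1). \<forall>j<p ^ (n - 1).
               adj p n q (a * p ^ (n - 1) + i) (b * p ^ (n - 1) + j) = B b i j)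
            \<and> (\<forall>i<p ^ (n - 1). \<forall>j<p ^ (n - 1).
               (\<Sum>b<p. B b i j) = adj p (n - 1) q i j))"
proof -
  have "\<forall>x<p. \<forall>z<p. adj p 1 q x z \<le> (if z = 0 then 0 else 1)"
    using adj_one_eq[OF assms] by simp
  moreover note adj_one_complete_iff_primroot[OF assms]
  moreover have "\<exists>B :: nat \<Rightarrow> nat \<Rightarrow> nat \<Rightarrow> int.
            (\<forall>a<p. \<forall>b<p. \<forall>i<p ^ (n - 1). \<forall>j<p ^ (n - 1).
               adj p n q (a * p ^ (n - 1) + i) (b * p ^ (n - 1) + j) = B b i j)
            \<and> (\<forall>i<p ^ (n - 1). \<forall>j<p ^ (n - 1).
               (\<Sum>b<p. B b i j) = adj p (n - 1) q i j)" if "1 < n" for n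
  proof (intro exI[of _ "\<lambda>b i j. adj p n q i (b * p ^ (n - 1) + j)"] conjI allI impI)
    fix a b i j
    assume "a < p" "i < p ^ (n - 1)"
    with that show "adj p n q (a * p ^ (n - 1) + i) (b * p ^ (n - 1) + j)
                    = adj p n q i (b * p ^ (n - 1) + j)"
      by (intro adj_block_row[OF assms]) simp_all
  next
    fix i j
    assume "i < p ^ (n - 1)" "j < p ^ (n - 1)"
    with that show "(\<Sum>b<p. adj p n q i (b * p ^ (n - 1) + j)) = adj p (n - 1) q i j"
      by (intro adj_block_column_sum[OF assms]) simp_all
  qed
  ultimately show ?thesis
    by blast
qed

end
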